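(* The cometric $g^{ij}(u):=\sum_{k,l}g^{kl}(p)\frac{\partial u_i}{\partial p_k}\frac{\partial u_j}{\partial p_l}$, where $g^{kl}(p)=\frac{1-\delta^{kl}}{p_kp_l}$, can be written in terms of the invariant polynomials $u_1,\dots,u_n$ and is well defined on the quotient $\mathbb{C}^n/B_n$. Moreover, for each $i,j$, $g^{ij}(u)$ is a homogeneous polynomial in the $p$-variables of degree $2i+2j-4$, which depends at most linearly on $u_{n-1}$. In particular $g^{11}(u)=4(n^2-n)$.
   Context: $n\ge2$. $B_n$ acts on $\mathbb{C}^n$ (coordinates $p_1,\dots,p_n$) by permutations and sign changes of coordinates. $u_k=\sum_{1\le i_1<\dots<i_k\le n}p_{i_1}^2\cdots p_{i_k}^2$ for $k=1,\dots,n$ (elementary symmetric polynomials in $p_1^2,\dots,p_n^2$), a set of basic invariants; $u_k$ is homogeneous of degree $2k$ in $p$. *)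

theory Defs
  imports "HOL-Analysis.Analysis" "HOL-Library.Poly_Mapping" "HOL-Combinatorics.Permutations"
begin

(* Points of C^n: functions p :: nat => complex, coordinates p 1, ..., p n. *)

definition u_inv :: "nat \<Rightarrow> nat \<Rightarrow> (nat \<Rightarrow> complex) \<Rightarrow> complex" where
  "u_inv n k p = (\<Sum>S | S \<subseteq> {1..n} \<and> card S = k. \<Prod>i\<in>S. (p i)^2)"

definition pderiv_c :: "nat \<Rightarrow> ((nat \<Rightarrow> complex) \<Rightarrow> complex) \<Rightarrow> (nat \<Rightarrow> complex) \<Rightarrow> complex" where
  "pderiv_c k f p = deriv (\<lambda>t. f (p(k := t))) (p k)"

definition metric_g :: "nat \<Rightarrow> nat \<Rightarrow> (nat \<Rightarrow> complex) \<Rightarrow> complex" where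
  "metric_g k l p = (1 - (if k = l then 1 else 0)) / (p k * p l)"

definition cometric :: "nat \<Rightarrow> nat \<Rightarrow> nat \<Rightarrow> (nat \<Rightarrow> complex) \<Rightarrow> complex" where
  "cometric n i j p = (\<Sum>k\<in>{1..n}. \<Sum>l\<in>{1..n}.
      metric_g k l p * pderiv_c k (u_inv n i) p * pderiv_c l (u_inv n j) p)"

(* multivariate polynomials as finitely supported maps from monomials to coefficients;
   evaluation at x :: nat => complex *)
definition mpoly_eval :: "((nat \<Rightarrow>\<^sub>0 nat) \<Rightarrow>\<^sub>0 complex) \<Rightarrow> (nat \<Rightarrow> complex) \<Rightarrow> complex" where
  "mpoly_eval P x = (\<Sum>m\<in>Poly_Mapping.keys P.
      Poly_Mapping.lookup P m * (\<Prod>v\<in>Poly_Mapping.keys m. x v ^ Poly_Mapping.lookup m v))"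

end

(*
  Write x_i = p_i^2 and e_a^(k) for the a-th elementary symmetric polynomial of the x_i with
  i <> k. Then du_(a+1)/dp_k = 2 p_k e_a^(k), and since g^kl vanishes on the diagonal,
  g^(a+1,b+1) = 4 * sum over k <> l of e_a^(k) e_b^(l). Summing the deletion identity
  e_(a+1) = e_(a+1)^(k) + x_k e_a^(k) over k gives sum_k e_a^(k) = (n - a) e_a and a recursion
  for the diagonal sums sum_k e_a^(k) e_b^(k); together they express g^ij as an explicit
  quadratic polynomial in u_0 = 1, u_1, ..., u_n of p-degree 2i + 2j - 4, in which the
  coefficient of u_(n-1)^2 vanishes. Invariance under B_n and homogeneity follow because each
  u_k is B_n-invariant and homogeneous of degree 2k.
*)

theory Submission
  imports Defs
begin

section \<open>Elementary symmetric polynomials\<close>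

definition esym :: "'b set \<Rightarrow> nat \<Rightarrow> ('b \<Rightarrow> 'a :: comm_semiring_1) \<Rightarrow> 'a" where
  "esym I k x = (\<Sum>S | S \<subseteq> I \<and> card S = k. \<Prod>i\<in>S. x i)"

lemma esym_cong: "(\<And>i. i \<in> I \<Longrightarrow> x i = y i) \<Longrightarrow> esym I k x = esym I k y"
  unfolding esym_def by (intro sum.cong refl prod.cong) auto

lemma esym_0 [simp]:
  assumes "finite I"
  shows "esym I 0 x = 1"
proof -
  have "{S. S \<subseteq> I \<and> card S = 0} = {{}}"
    using assms by (auto dest: finite_subset)
  then show ?thesis by (simp add: esym_def)
qed

lemma esym_eq_0_if_card_less:
  assumes "finite I" "card I < k"
  shows "esym I k x = 0"
proof -
  have "card S \<le> card I" if "S \<subseteq> I" for S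
    using assms(1) that by (rule card_mono)
  then have "{S. S \<subseteq> I \<and> card S = k} = {}"
    using assms(2) leD by blast
  then show ?thesis
    unfolding esym_def by (simp only: sum.empty)
qed

lemma esym_insert:
  assumes I: "finite I" and k: "k \<notin> I"
  shows "esym (insert k I) (Suc a) x = esym I (Suc a) x + x k * esym I a x"
proof -
  let ?subsets = "\<lambda>b. {S. S \<subseteq> I \<and> card S = b}"
  have card_insert: "card (insert k S) = Suc a \<longleftrightarrow> card S = a" if "S \<subseteq> I" for S
  proof -
    have "finite S" "k \<notin> S" using that I k finite_subset by auto
    then show ?thesis by simp
  qed
  have split: "{S. S \<subseteq> insert k I \<and> card S = Suc a} = ?subsets (Suc a) \<union> insert k ` ?subsets a"
  proof -
    have "{insert k S |S. S \<subseteq> I \<and> card (insert k S) = Suc a} = insert k ` ?subsets a"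
      using card_insert by blast
    then show ?thesis by (simp only: subset_insert_lemma)
  qed
  have disjoint: "?subsets (Suc a) \<inter> insert k ` ?subsets a = {}"
    using k by auto
  have inj: "inj_on (insert k) (?subsets a)"
  proof (rule inj_onI)
    fix S T assume "S \<in> ?subsets a" "T \<in> ?subsets a" "insert k S = insert k T"
    with k show "S = T" by (auto simp: insert_ident)
  qed
  have prod_insert: "(\<Prod>i\<in>insert k S. x i) = x k * (\<Prod>i\<in>S. x i)" if "S \<in> ?subsets a" for S
  proof -
    have "finite S" "k \<notin> S" using that I k finite_subset by auto
    then show ?thesis by simp
  qed
  have "esym (insert k I) (Suc a) x
      = (\<Sum>S\<in>?subsets (Suc a). \<Prod>i\<in>S. x i) + (\<Sum>S\<in>insert k ` ?subsets a. \<Prod>i\<in>S. x i)"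
    unfolding esym_def split using I disjoint by (intro sum.union_disjoint) auto
  also have "(\<Sum>S\<in>insert k ` ?subsets a. \<Prod>i\<in>S. x i) = (\<Sum>S\<in>?subsets a. x k * (\<Prod>i\<in>S. x i))"
    using inj prod_insert by (simp add: sum.reindex)
  finally show ?thesis
    unfolding esym_def by (simp only: sum_distrib_left)
qed

lemma esym_remove:
  assumes "finite I" "k \<in> I"
  shows "esym I (Suc a) x = esym (I - {k}) (Suc a) x + x k * esym (I - {k}) a x"
  using esym_insert[of "I - {k}" k a x] assms by (simp add: insert_absorb)

lemma sum_esym_remove:
  fixes x :: "'b \<Rightarrow> 'a :: comm_ring_1"
  assumes I: "finite I"
  shows "(\<Sum>k\<in>I. esym (I - {k}) a x) = (of_nat (card I) - of_nat a) * esym I a x"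
proof (cases "a \<le> card I")
  case False
  then have "esym (I - {k}) a x = 0" if "k \<in> I" for k
    using I that by (intro esym_eq_0_if_card_less) (auto simp: card_Diff_singleton)
  then show ?thesis
    using I False by (simp add: esym_eq_0_if_card_less)
next
  case True
  let ?subsets = "{S. S \<subseteq> I \<and> card S = a}"
  have "(\<Sum>k\<in>I. esym (I - {k}) a x) = (\<Sum>k\<in>I. \<Sum>S\<in>{S \<in> ?subsets. k \<notin> S}. \<Prod>i\<in>S. x i)"
    unfolding esym_def by (intro sum.cong refl) auto
  also have "\<dots> = (\<Sum>S\<in>?subsets. \<Sum>k\<in>{k \<in> I. k \<notin> S}. \<Prod>i\<in>S. x i)"
    using I by (intro sum.swap_restrict) auto
  also have "\<dots> = (\<Sum>S\<in>?subsets. \<Sum>k\<in>I - S. \<Prod>i\<in>S. x i)"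
    by (simp add: set_diff_eq)
  also have "\<dots> = (\<Sum>S\<in>?subsets. (of_nat (card I) - of_nat a) * (\<Prod>i\<in>S. x i))"
  proof (intro sum.cong refl)
    fix S assume S: "S \<in> ?subsets"
    then have "card (I - S) = card I - a"
      using I by (auto simp: card_Diff_subset finite_subset)
    then show "(\<Sum>k\<in>I - S. \<Prod>i\<in>S. x i) = (of_nat (card I) - of_nat a) * (\<Prod>i\<in>S. x i)"
      using True by simp
  qed
  finally show ?thesis
    unfolding esym_def by (simp only: sum_distrib_left)
qed

lemma esym_reindex:
  assumes f: "inj_on f I"
  shows "esym I k (x \<circ> f) = esym (f ` I) k x"
proof -
  let ?subsets = "{S. S \<subseteq> I \<and> card S = k}"
  have card_image_subset: "card (f ` S) = card S" if "S \<subseteq> I" for S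
    using f that by (meson card_image inj_on_subset)
  have "{T. T \<subseteq> f ` I \<and> card T = k} = image f ` ?subsets"
    using card_image_subset by (auto simp: subset_image_iff)
  moreover have "inj_on (image f) ?subsets"
    using inj_on_image_Pow[OF f] by (rule inj_on_subset) auto
  moreover have "(\<Prod>i\<in>f ` S. x i) = (\<Prod>i\<in>S. (x \<circ> f) i)" if "S \<in> ?subsets" for S
    using f that by (simp add: prod.reindex inj_on_subset)
  ultimately show ?thesis
    unfolding esym_def by (simp add: sum.reindex)
qed

lemma esym_permute:
  assumes "\<sigma> permutes I"
  shows "esym I k (x \<circ> \<sigma>) = esym I k x"
  using esym_reindex[OF permutes_inj_on[OF assms], of I k x] permutes_image[OF assms] by simp

section \<open>Sums of elementary symmetric polynomials with one variable deleted\<close>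

definition esym_del_inner :: "'b set \<Rightarrow> nat \<Rightarrow> nat \<Rightarrow> ('b \<Rightarrow> 'a :: comm_ring_1) \<Rightarrow> 'a" where
  "esym_del_inner I a b x = (\<Sum>k\<in>I. esym (I - {k}) a x * esym (I - {k}) b x)"

context
  fixes I :: "'b set"
  assumes I: "finite I"
begin

lemma esym_del_inner_0: "esym_del_inner I a 0 x = (of_nat (card I) - of_nat a) * esym I a x"
  unfolding esym_del_inner_def using I by (simp add: sum_esym_remove)

lemma esym_del_inner_Suc:
  "esym_del_inner I a (Suc b) x
     = (of_nat (card I) - of_nat a) * esym I a x * esym I (Suc b) x
     - (of_nat (card I) - of_nat b) * esym I (Suc a) x * esym I b x
     + esym_del_inner I (Suc a) b x"
proof -
  have "esym_del_inner I a (Suc b) x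
      = (\<Sum>k\<in>I. esym I (Suc b) x * esym (I - {k}) a x
          - esym I (Suc a) x * esym (I - {k}) b x + esym (I - {k}) (Suc a) x * esym (I - {k}) b x)"
    unfolding esym_del_inner_def using I
    by (intro sum.cong refl) (simp add: esym_remove[of I] algebra_simps)
  also have "\<dots> = esym I (Suc b) x * (\<Sum>k\<in>I. esym (I - {k}) a x)
      - esym I (Suc a) x * (\<Sum>k\<in>I. esym (I - {k}) b x) + esym_del_inner I (Suc a) b x"
    unfolding esym_del_inner_def by (simp add: sum.distrib sum_subtractf sum_distrib_left)
  finally show ?thesis
    using I by (simp add: sum_esym_remove algebra_simps)
qed

lemma esym_del_inner_Suc_closed:
  "esym_del_inner I a (Suc b) x
     = (of_nat (card I) - of_nat a) * esym I a x * esym I (Suc b) x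
     + (\<Sum>d=1..b. (of_nat b + 1 - of_nat a - 2 * of_nat d) * esym I (a + d) x * esym I (Suc b - d) x)
     - (of_nat a + of_nat b + 1) * esym I (a + b + 1) x"
proof (induction b arbitrary: a)
  case 0
  show ?case
    using I by (simp add: esym_del_inner_Suc esym_del_inner_0 algebra_simps)
next
  case (Suc b)
  let ?e = "\<lambda>c. esym I c x"
  have "(\<Sum>d=1..Suc b. (of_nat (Suc b) + 1 - of_nat a - 2 * of_nat d) * ?e (a + d) * ?e (Suc (Suc b) - d))
      = (of_nat (Suc b) + 1 - of_nat a - 2) * ?e (a + 1) * ?e (Suc b)
      + (\<Sum>d=1..b. (of_nat (Suc b) + 1 - of_nat a - 2 * of_nat (Suc d)) * ?e (a + Suc d) * ?e (Suc (Suc b) - Suc d))"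
    by (simp only: sum.atLeast_Suc_atMost[of 1 "Suc b"] sum.shift_bounds_cl_Suc_ivl) simp
  also have "\<dots> = (of_nat b - of_nat a) * ?e (Suc a) * ?e (Suc b)
      + (\<Sum>d=1..b. (of_nat b + 1 - of_nat (Suc a) - 2 * of_nat d) * ?e (Suc a + d) * ?e (Suc b - d))"
    by (intro arg_cong2[where f = "(+)"] sum.cong refl) (simp_all add: algebra_simps)
  finally show ?case
    unfolding esym_del_inner_Suc[of a "Suc b"] Suc.IH[of "Suc a"]
    by (simp add: algebra_simps)
qed

lemma sum_offdiag_esym_del:
  "(\<Sum>k\<in>I. \<Sum>l\<in>I - {k}. esym (I - {k}) a x * esym (I - {l}) b x)
     = (of_nat (card I) - of_nat a) * (of_nat (card I) - of_nat b) * esym I a x * esym I b x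
     - esym_del_inner I a b x"
proof -
  have "(\<Sum>k\<in>I. \<Sum>l\<in>I - {k}. esym (I - {k}) a x * esym (I - {l}) b x)
      = (\<Sum>k\<in>I. esym (I - {k}) a x * (\<Sum>l\<in>I. esym (I - {l}) b x)
          - esym (I - {k}) a x * esym (I - {k}) b x)"
    using I by (intro sum.cong refl) (simp add: sum_diff1 sum_distrib_left)
  also have "\<dots> = (\<Sum>k\<in>I. esym (I - {k}) a x) * (\<Sum>l\<in>I. esym (I - {l}) b x)
      - esym_del_inner I a b x"
    unfolding esym_del_inner_def by (simp add: sum_subtractf sum_distrib_right)
  finally show ?thesis
    using I by (simp add: sum_esym_remove algebra_simps)
qed

end

section \<open>The cometric in terms of the invariants\<close>

lemma u_inv_eq_esym: "u_inv n k p = esym {1..n} k (\<lambda>i. p i ^ 2)"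
  by (simp add: u_inv_def esym_def)

lemma u_inv_0 [simp]: "u_inv n 0 p = 1"
  by (simp add: u_inv_eq_esym)

lemma u_inv_eq_0_if_less: "n < k \<Longrightarrow> u_inv n k p = 0"
  by (simp add: u_inv_eq_esym esym_eq_0_if_card_less)

lemma pderiv_c_u_inv:
  assumes k: "k \<in> {1..n}"
  shows "pderiv_c k (u_inv n (Suc a)) p = 2 * p k * esym ({1..n} - {k}) a (\<lambda>i. p i ^ 2)"
proof -
  let ?J = "{1..n} - {k}"
  let ?A = "esym ?J (Suc a) (\<lambda>i. p i ^ 2)"
  let ?B = "esym ?J a (\<lambda>i. p i ^ 2)"
  have "u_inv n (Suc a) (p(k := t)) = ?A + t ^ 2 * ?B" for t
  proof -
    have "u_inv n (Suc a) (p(k := t))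
        = esym ?J (Suc a) (\<lambda>i. (p(k := t)) i ^ 2) + t ^ 2 * esym ?J a (\<lambda>i. (p(k := t)) i ^ 2)"
      unfolding u_inv_eq_esym using k by (subst esym_remove[of _ k]) auto
    also have "esym ?J (Suc a) (\<lambda>i. (p(k := t)) i ^ 2) = ?A"
      by (rule esym_cong) auto
    also have "esym ?J a (\<lambda>i. (p(k := t)) i ^ 2) = ?B"
      by (rule esym_cong) auto
    finally show ?thesis .
  qed
  moreover have "((\<lambda>t. ?A + t ^ 2 * ?B) has_field_derivative 2 * p k * ?B) (at (p k))"
    by (auto intro!: derivative_eq_intros)
  ultimately show ?thesis
    unfolding pderiv_c_def by (simp add: DERIV_imp_deriv)
qed

lemma cometric_eq_sum_offdiag:
  assumes nz: "\<forall>k\<in>{1..n}. p k \<noteq> 0"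
  shows "cometric n (Suc a) (Suc b) p = 4 * (\<Sum>k\<in>{1..n}. \<Sum>l\<in>{1..n} - {k}.
      esym ({1..n} - {k}) a (\<lambda>i. p i ^ 2) * esym ({1..n} - {l}) b (\<lambda>i. p i ^ 2))"
proof -
  let ?term = "\<lambda>k l. metric_g k l p * pderiv_c k (u_inv n (Suc a)) p * pderiv_c l (u_inv n (Suc b)) p"
  have "?term k l = 4 * esym ({1..n} - {k}) a (\<lambda>i. p i ^ 2) * esym ({1..n} - {l}) b (\<lambda>i. p i ^ 2)"
    if "k \<in> {1..n}" "l \<in> {1..n}" "l \<noteq> k" for k l
    using that nz by (simp add: pderiv_c_u_inv metric_g_def field_simps)
  moreover have "(\<Sum>l\<in>{1..n}. ?term k l) = (\<Sum>l\<in>{1..n} - {k}. ?term k l)" if "k \<in> {1..n}" for k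
    using that by (intro sum.mono_neutral_right) (auto simp: metric_g_def)
  ultimately show ?thesis
    unfolding cometric_def sum_distrib_left by (auto intro!: sum.cong simp: mult.assoc)
qed

lemma cometric_Suc_1:
  assumes "\<forall>k\<in>{1..n}. p k \<noteq> 0"
  shows "cometric n (Suc a) 1 p = 4 * (of_nat n - of_nat a) * (of_nat n - 1) * u_inv n a p"
  using cometric_eq_sum_offdiag[OF assms, of a 0]
  unfolding sum_offdiag_esym_del[OF finite_atLeastAtMost] esym_del_inner_0[OF finite_atLeastAtMost]
  by (simp add: u_inv_eq_esym algebra_simps)

lemma cometric_Suc_Suc_Suc:
  assumes "\<forall>k\<in>{1..n}. p k \<noteq> 0"
  shows "cometric n (Suc a) (Suc (Suc b)) p = 4 *
      ((of_nat n - of_nat a) * (of_nat n - of_nat b - 2) * u_inv n a p * u_inv n (Suc b) p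
     - (\<Sum>d=1..b. (of_nat b + 1 - of_nat a - 2 * of_nat d) * u_inv n (a + d) p * u_inv n (Suc b - d) p)
     + (of_nat a + of_nat b + 1) * u_inv n (a + b + 1) p)"
  using cometric_eq_sum_offdiag[OF assms, of a "Suc b"]
  by (simp add: sum_offdiag_esym_del esym_del_inner_Suc_closed u_inv_eq_esym algebra_simps)

lemma cometric_1_1:
  assumes "\<forall>k\<in>{1..n}. p k \<noteq> 0"
  shows "cometric n 1 1 p = 4 * (of_nat n ^ 2 - of_nat n)"
  using cometric_Suc_1[OF assms, of 0] by (simp add: power2_eq_square algebra_simps)

section \<open>Polynomials in the invariants\<close>

definition eval_monomial :: "(nat \<Rightarrow>\<^sub>0 nat) \<Rightarrow> (nat \<Rightarrow> complex) \<Rightarrow> complex" where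
  "eval_monomial m y = (\<Prod>v\<in>Poly_Mapping.keys m. y v ^ Poly_Mapping.lookup m v)"

definition p_degree :: "(nat \<Rightarrow>\<^sub>0 nat) \<Rightarrow> nat" where
  "p_degree m = (\<Sum>v\<in>Poly_Mapping.keys m. 2 * v * Poly_Mapping.lookup m v)"

lemma eval_monomial_superset:
  assumes "finite V" "Poly_Mapping.keys m \<subseteq> V"
  shows "eval_monomial m y = (\<Prod>v\<in>V. y v ^ Poly_Mapping.lookup m v)"
  unfolding eval_monomial_def
  by (rule prod.mono_neutral_left) (use assms in \<open>auto simp: in_keys_iff\<close>)

lemma p_degree_superset:
  assumes "finite V" "Poly_Mapping.keys m \<subseteq> V"
  shows "p_degree m = (\<Sum>v\<in>V. 2 * v * Poly_Mapping.lookup m v)"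
  unfolding p_degree_def
  by (rule sum.mono_neutral_left) (use assms in \<open>auto simp: in_keys_iff\<close>)

lemma mpoly_eval_superset:
  assumes "finite K" "Poly_Mapping.keys P \<subseteq> K"
  shows "mpoly_eval P y = (\<Sum>m\<in>K. Poly_Mapping.lookup P m * eval_monomial m y)"
  unfolding mpoly_eval_def eval_monomial_def
  by (rule sum.mono_neutral_left) (use assms in \<open>auto simp: in_keys_iff\<close>)

lemma eval_monomial_add: "eval_monomial (m + m') y = eval_monomial m y * eval_monomial m' y"
proof -
  let ?V = "Poly_Mapping.keys m \<union> Poly_Mapping.keys m'"
  have "eval_monomial (m + m') y = (\<Prod>v\<in>?V. y v ^ Poly_Mapping.lookup (m + m') v)"
    by (rule eval_monomial_superset) (simp_all add: keys_add)
  also have "\<dots> = (\<Prod>v\<in>?V. y v ^ Poly_Mapping.lookup m v) * (\<Prod>v\<in>?V. y v ^ Poly_Mapping.lookup m' v)"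
    by (simp add: lookup_add power_add prod.distrib)
  finally show ?thesis
    by (simp add: eval_monomial_superset[of ?V])
qed

lemma p_degree_add: "p_degree (m + m') = p_degree m + p_degree m'"
proof -
  let ?V = "Poly_Mapping.keys m \<union> Poly_Mapping.keys m'"
  have "p_degree (m + m') = (\<Sum>v\<in>?V. 2 * v * Poly_Mapping.lookup (m + m') v)"
    by (rule p_degree_superset) (simp_all add: keys_add)
  also have "\<dots> = (\<Sum>v\<in>?V. 2 * v * Poly_Mapping.lookup m v) + (\<Sum>v\<in>?V. 2 * v * Poly_Mapping.lookup m' v)"
    by (simp add: lookup_add sum.distrib algebra_simps)
  finally show ?thesis
    by (simp add: p_degree_superset[of ?V])
qed

lemma mpoly_eval_0 [simp]: "mpoly_eval 0 y = 0"
  by (simp add: mpoly_eval_def)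

lemma mpoly_eval_add: "mpoly_eval (P + Q) y = mpoly_eval P y + mpoly_eval Q y"
proof -
  let ?K = "Poly_Mapping.keys P \<union> Poly_Mapping.keys Q"
  have "mpoly_eval (P + Q) y = (\<Sum>m\<in>?K. Poly_Mapping.lookup (P + Q) m * eval_monomial m y)"
    by (rule mpoly_eval_superset) (simp_all add: keys_add)
  also have "\<dots> = (\<Sum>m\<in>?K. Poly_Mapping.lookup P m * eval_monomial m y)
      + (\<Sum>m\<in>?K. Poly_Mapping.lookup Q m * eval_monomial m y)"
    by (simp add: lookup_add sum.distrib algebra_simps)
  finally show ?thesis
    by (simp add: mpoly_eval_superset[of ?K])
qed

lemma mpoly_eval_sum: "mpoly_eval (\<Sum>i\<in>A. P i) y = (\<Sum>i\<in>A. mpoly_eval (P i) y)"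
proof (induction A rule: infinite_finite_induct)
  case (insert i A)
  then show ?case by (simp add: mpoly_eval_add)
qed simp_all

lemma mpoly_eval_single: "mpoly_eval (Poly_Mapping.single m c) y = c * eval_monomial m y"
  by (simp add: mpoly_eval_def eval_monomial_def)

lemma mpoly_eval_scale_variables:
  assumes "\<forall>m\<in>Poly_Mapping.keys P. p_degree m = w"
  shows "mpoly_eval P (\<lambda>k. t ^ (2 * k) * y k) = t ^ w * mpoly_eval P y"
  unfolding mpoly_eval_def sum_distrib_left
proof (rule sum.cong[OF refl])
  fix m assume m: "m \<in> Poly_Mapping.keys P"
  have "(\<Prod>v\<in>Poly_Mapping.keys m. (t ^ (2 * v) * y v) ^ Poly_Mapping.lookup m v)
      = (\<Prod>v\<in>Poly_Mapping.keys m. t ^ (2 * v * Poly_Mapping.lookup m v))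
      * (\<Prod>v\<in>Poly_Mapping.keys m. y v ^ Poly_Mapping.lookup m v)"
    by (simp add: power_mult_distrib prod.distrib power_mult)
  also have "(\<Prod>v\<in>Poly_Mapping.keys m. t ^ (2 * v * Poly_Mapping.lookup m v)) = t ^ p_degree m"
    by (simp add: p_degree_def power_sum)
  also have "p_degree m = w"
    using assms m by simp
  finally show "Poly_Mapping.lookup P m * (\<Prod>v\<in>Poly_Mapping.keys m. (t ^ (2 * v) * y v) ^ Poly_Mapping.lookup m v)
      = t ^ w * (Poly_Mapping.lookup P m * (\<Prod>v\<in>Poly_Mapping.keys m. y v ^ Poly_Mapping.lookup m v))"
    by simp
qed

text \<open>A monomial in \<open>u\<^sub>1, \<dots>, u\<^sub>n\<close> is a map from indices to exponents; \<open>u\<^sub>0 = 1\<close> is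
  encoded by the empty monomial, and products involving some \<open>u\<^sub>c\<close> with \<open>c > n\<close> are dropped
  because \<open>u\<^sub>c = 0\<close> then.\<close>

definition u_var :: "nat \<Rightarrow> nat \<Rightarrow>\<^sub>0 nat" where
  "u_var c = (if c = 0 then 0 else Poly_Mapping.single c 1)"

definition u_product :: "nat \<Rightarrow> complex \<Rightarrow> nat \<Rightarrow> nat \<Rightarrow> (nat \<Rightarrow>\<^sub>0 nat) \<Rightarrow>\<^sub>0 complex" where
  "u_product n coef c d =
     (if c \<le> n \<and> d \<le> n then Poly_Mapping.single (u_var c + u_var d) coef else 0)"

lemma eval_monomial_u_var: "eval_monomial (u_var c) y = (if c = 0 then 1 else y c)"
  by (simp add: eval_monomial_def u_var_def)

lemma p_degree_u_var: "p_degree (u_var c) = 2 * c"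
  by (simp add: p_degree_def u_var_def)

lemma mpoly_eval_u_product:
  assumes "y 0 = 1" "\<And>c. n < c \<Longrightarrow> y c = 0"
  shows "mpoly_eval (u_product n coef c d) y = coef * y c * y d"
  using assms
  by (auto simp: u_product_def mpoly_eval_single eval_monomial_add eval_monomial_u_var)

definition admissible_poly :: "nat \<Rightarrow> nat \<Rightarrow> ((nat \<Rightarrow>\<^sub>0 nat) \<Rightarrow>\<^sub>0 complex) \<Rightarrow> bool" where
  "admissible_poly n w P \<longleftrightarrow> (\<forall>m\<in>Poly_Mapping.keys P.
     Poly_Mapping.keys m \<subseteq> {1..n} \<and> p_degree m = w \<and> Poly_Mapping.lookup m (n - 1) \<le> 1)"

lemma admissible_poly_add:
  "admissible_poly n w P \<Longrightarrow> admissible_poly n w Q \<Longrightarrow> admissible_poly n w (P + Q)"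
  using keys_add[of P Q] by (auto simp: admissible_poly_def)

lemma admissible_poly_sum:
  "(\<And>i. i \<in> A \<Longrightarrow> admissible_poly n w (P i)) \<Longrightarrow> admissible_poly n w (\<Sum>i\<in>A. P i)"
  unfolding admissible_poly_def using keys_sum[of P A] by blast

lemma admissible_poly_u_product:
  assumes "2 * c + 2 * d = w" and "\<lbrakk>c = n - 1; d = n - 1; 2 \<le> n\<rbrakk> \<Longrightarrow> coef = 0"
  shows "admissible_poly n w (u_product n coef c d)"
  unfolding admissible_poly_def
proof
  fix m assume "m \<in> Poly_Mapping.keys (u_product n coef c d)"
  then have cd: "c \<le> n" "d \<le> n" "coef \<noteq> 0" and m: "m = u_var c + u_var d"
    by (auto simp: u_product_def split: if_splits)
  have "Poly_Mapping.keys m \<subseteq> {1..n}"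
    using keys_add[of "u_var c" "u_var d"] cd by (auto simp: m u_var_def split: if_splits)
  moreover have "p_degree m = w"
    using assms(1) by (simp add: m p_degree_add p_degree_u_var)
  moreover have "Poly_Mapping.lookup m (n - 1) \<le> 1"
    using assms(2) cd by (auto simp: m lookup_add u_var_def lookup_single when_def)
  ultimately show "Poly_Mapping.keys m \<subseteq> {1..n} \<and> p_degree m = w \<and> Poly_Mapping.lookup m (n - 1) \<le> 1"
    by blast
qed

fun cometric_poly :: "nat \<Rightarrow> nat \<Rightarrow> nat \<Rightarrow> (nat \<Rightarrow>\<^sub>0 nat) \<Rightarrow>\<^sub>0 complex" where
  "cometric_poly n (Suc a) (Suc 0) = u_product n (4 * (of_nat n - of_nat a) * (of_nat n - 1)) a 0"
| "cometric_poly n (Suc a) (Suc (Suc b)) =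
     u_product n (4 * (of_nat n - of_nat a) * (of_nat n - of_nat b - 2)) a (Suc b)
   + (\<Sum>d=1..b. u_product n (- 4 * (of_nat b + 1 - of_nat a - 2 * of_nat d)) (a + d) (Suc b - d))
   + u_product n (4 * (of_nat a + of_nat b + 1)) (a + b + 1) 0"
| "cometric_poly n _ _ = 0"

lemma cometric_eq_eval_cometric_poly:
  assumes "1 \<le> i" "1 \<le> j" and nz: "\<forall>k\<in>{1..n}. p k \<noteq> 0"
  shows "cometric n i j p = mpoly_eval (cometric_poly n i j) (\<lambda>k. u_inv n k p)"
proof -
  have eval: "mpoly_eval (u_product n coef c d) (\<lambda>k. u_inv n k p) = coef * u_inv n c p * u_inv n d p"
    for coef c d
    by (rule mpoly_eval_u_product) (simp_all add: u_inv_eq_0_if_less)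
  obtain a where a: "i = Suc a"
    using assms(1) by (cases i) auto
  consider "j = Suc 0" | b where "j = Suc (Suc b)"
    using assms(2) by (cases j; cases "j - 1") auto
  then show ?thesis
  proof cases
    case 1
    then show ?thesis
      using cometric_Suc_1[OF nz] by (simp add: a eval)
  next
    case 2
    let ?u = "\<lambda>k. u_inv n k p"
    have middle: "(\<Sum>d=1..b. - 4 * (of_nat b + 1 - of_nat a - 2 * of_nat d) * ?u (a + d) * ?u (Suc b - d))
        = - (4 * (\<Sum>d=1..b. (of_nat b + 1 - of_nat a - 2 * of_nat d) * ?u (a + d) * ?u (Suc b - d)))"
      unfolding sum_distrib_left sum_negf[symmetric] by (rule sum.cong) (auto simp: algebra_simps)
    show ?thesis
      unfolding a 2 cometric_Suc_Suc_Suc[OF nz] cometric_poly.simps mpoly_eval_add mpoly_eval_sum eval middle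
      by (simp add: algebra_simps)
  qed
qed

lemma cometric_poly_admissible: "admissible_poly n (2 * i + 2 * j - 4) (cometric_poly n i j)"
proof (cases "(n, i, j)" rule: cometric_poly.cases)
  case (1 n' a)
  then show ?thesis
    by (auto intro!: admissible_poly_u_product)
next
  case (2 n' a b)
  have first: "admissible_poly n (2 * i + 2 * j - 4)
      (u_product n (4 * (of_nat n - of_nat a) * (of_nat n - of_nat b - 2)) a (Suc b))"
  proof (rule admissible_poly_u_product)
    show "2 * a + 2 * Suc b = 2 * i + 2 * j - 4"
      using 2 by simp
    assume "a = n - 1" "Suc b = n - 1" "2 \<le> n"
    then have "n = b + 2"
      by linarith
    then show "4 * (of_nat n - of_nat a) * (of_nat n - of_nat b - 2) = (0 :: complex)"
      by simp
  qed
  have middle: "admissible_poly n (2 * i + 2 * j - 4)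
      (u_product n (- 4 * (of_nat b + 1 - of_nat a - 2 * of_nat d)) (a + d) (Suc b - d))"
    if d: "d \<in> {1..b}" for d
  proof (rule admissible_poly_u_product)
    show "2 * (a + d) + 2 * (Suc b - d) = 2 * i + 2 * j - 4"
      using 2 d by auto
    assume "a + d = n - 1" "Suc b - d = n - 1"
    then have "b + 1 = a + 2 * d"
      using d by simp
    then have "(of_nat (b + 1) :: complex) = of_nat (a + 2 * d)"
      by (simp only:)
    then show "- 4 * (of_nat b + 1 - of_nat a - 2 * of_nat d) = (0 :: complex)"
      unfolding of_nat_add of_nat_mult of_nat_1 of_nat_numeral by algebra
  qed
  have last: "admissible_poly n (2 * i + 2 * j - 4) (u_product n (4 * (of_nat a + of_nat b + 1)) (a + b + 1) 0)"
    using 2 by (intro admissible_poly_u_product) auto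
  show ?thesis
    using 2 first middle last by (auto intro!: admissible_poly_add admissible_poly_sum)
qed (auto simp: admissible_poly_def)

lemma cometric_polynomial_in_invariants:
  assumes "1 \<le> i" "1 \<le> j"
  shows "\<exists>G. admissible_poly n (2 * i + 2 * j - 4) G
    \<and> (\<forall>p. (\<forall>k\<in>{1..n}. p k \<noteq> 0) \<longrightarrow> cometric n i j p = mpoly_eval G (\<lambda>k. u_inv n k p))"
  using cometric_poly_admissible cometric_eq_eval_cometric_poly assms by blast

section \<open>Invariance and homogeneity\<close>

lemma u_inv_signed_permute:
  assumes \<sigma>: "\<sigma> permutes {1..n}" and \<epsilon>: "\<forall>k\<in>{1..n}. \<epsilon> k = 1 \<or> \<epsilon> k = -1"
  shows "u_inv n k (\<lambda>i. \<epsilon> i * p (\<sigma> i)) = u_inv n k p"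
proof -
  have "u_inv n k (\<lambda>i. \<epsilon> i * p (\<sigma> i)) = esym {1..n} k ((\<lambda>i. p i ^ 2) \<circ> \<sigma>)"
    unfolding u_inv_eq_esym
  proof (rule esym_cong)
    fix i assume "i \<in> {1..n}"
    then have "\<epsilon> i = 1 \<or> \<epsilon> i = -1"
      using \<epsilon> by blast
    then have "\<epsilon> i ^ 2 = 1"
      by auto
    then show "(\<epsilon> i * p (\<sigma> i)) ^ 2 = ((\<lambda>i. p i ^ 2) \<circ> \<sigma>) i"
      by (simp add: power_mult_distrib)
  qed
  also have "\<dots> = u_inv n k p"
    unfolding u_inv_eq_esym by (rule esym_permute[OF \<sigma>])
  finally show ?thesis .
qed

lemma u_inv_scale: "u_inv n k (\<lambda>i. t * p i) = t ^ (2 * k) * u_inv n k p"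
  unfolding u_inv_def sum_distrib_left
proof (rule sum.cong[OF refl])
  fix S assume "S \<in> {S. S \<subseteq> {1..n} \<and> card S = k}"
  then show "(\<Prod>i\<in>S. (t * p i) ^ 2) = t ^ (2 * k) * (\<Prod>i\<in>S. p i ^ 2)"
    by (simp add: power_mult_distrib prod.distrib power_mult)
qed

lemma cometric_signed_permute:
  assumes "1 \<le> i" "1 \<le> j"
    and \<sigma>: "\<sigma> permutes {1..n}" and \<epsilon>: "\<forall>k\<in>{1..n}. \<epsilon> k = 1 \<or> \<epsilon> k = -1"
    and nz: "\<forall>k\<in>{1..n}. p k \<noteq> 0"
  shows "cometric n i j (\<lambda>k. \<epsilon> k * p (\<sigma> k)) = cometric n i j p"
proof -
  have "\<forall>k\<in>{1..n}. \<epsilon> k * p (\<sigma> k) \<noteq> 0"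
    using \<epsilon> nz permutes_in_image[OF \<sigma>] by force
  then show ?thesis
    using assms by (simp add: cometric_eq_eval_cometric_poly u_inv_signed_permute)
qed

lemma cometric_scale:
  assumes "1 \<le> i" "1 \<le> j" "t \<noteq> 0" and nz: "\<forall>k\<in>{1..n}. p k \<noteq> 0"
  shows "cometric n i j (\<lambda>k. t * p k) = t ^ (2 * i + 2 * j - 4) * cometric n i j p"
proof -
  have "\<forall>m\<in>Poly_Mapping.keys (cometric_poly n i j). p_degree m = 2 * i + 2 * j - 4"
    using cometric_poly_admissible by (simp add: admissible_poly_def)
  moreover have "\<forall>k\<in>{1..n}. t * p k \<noteq> 0"
    using assms by simp
  ultimately show ?thesis
    using assms by (simp add: cometric_eq_eval_cometric_poly u_inv_scale mpoly_eval_scale_variables)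
qed

theorem mainTheorem5:
  fixes n :: nat
  assumes "n \<ge> 2"
  shows "(\<forall>i\<in>{1..n}. \<forall>j\<in>{1..n}. \<exists>G :: (nat \<Rightarrow>\<^sub>0 nat) \<Rightarrow>\<^sub>0 complex.
            (\<forall>m\<in>Poly_Mapping.keys G.
                Poly_Mapping.keys m \<subseteq> {1..n}
              \<and> (\<Sum>v\<in>Poly_Mapping.keys m. 2 * v * Poly_Mapping.lookup m v) = 2*i + 2*j - 4
              \<and> Poly_Mapping.lookup m (n - 1) \<le> 1)
          \<and> (\<forall>p. (\<forall>k\<in>{1..n}. p k \<noteq> 0) \<longrightarrow>
                 cometric n i j p = mpoly_eval G (\<lambda>k. u_inv n k p)))
       \<and> (\<forall>i\<in>{1..n}. \<forall>j\<in>{1..n}. \<forall>p \<sigma> (\<epsilon> :: nat \<Rightarrow> complex).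
            \<sigma> permutes {1..n} \<and> (\<forall>k\<in>{1..n}. \<epsilon> k = 1 \<or> \<epsilon> k = -1)
            \<and> (\<forall>k\<in>{1..n}. p k \<noteq> 0) \<longrightarrow>
              cometric n i j (\<lambda>k. \<epsilon> k * p (\<sigma> k)) = cometric n i j p)
       \<and> (\<forall>i\<in>{1..n}. \<forall>j\<in>{1..n}. \<forall>p (t :: complex).
            t \<noteq> 0 \<and> (\<forall>k\<in>{1..n}. p k \<noteq> 0) \<longrightarrow>
              cometric n i j (\<lambda>k. t * p k) = t ^ (2*i + 2*j - 4) * cometric n i j p)
       \<and> (\<forall>p. (\<forall>k\<in>{1..n}. p k \<noteq> 0) \<longrightarrow>
              cometric n 1 1 p = 4 * (of_nat n ^ 2 - of_nat n))"
  using cometric_polynomial_in_invariants cometric_signed_permute cometric_scale cometric_1_1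
  unfolding admissible_poly_def p_degree_def
  by (intro conjI ballI allI impI; force)

end
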